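(* Let $k$ be a positive integer, $\varphi:=2\max\{\psi,2\log|F|\}$, and $a\in[0,k)$. The restriction of the isomorphism $P:I_o/I(k\Psi)_o\to\mathcal{I}(k\varphi)_o/\mathcal{I}(k\varphi+k\Psi)_o$ to the submodule $I(a\Psi)_o/I(k\Psi)_o$ is an $\mathcal{O}_{\mathbb{C}^n,o}$-module isomorphism onto $\mathcal{I}(k\varphi+a\Psi)_o/\mathcal{I}(k\varphi+k\Psi)_o$.
   Context: Let $D\subset\mathbb{C}^n$ be a pseudoconvex domain containing the origin $o$, $F$ holomorphic on $D$, $\psi$ plurisubharmonic on $D$, $\Psi:=\min\{\psi-2\log|F|,0\}$ ($\Psi=0$ where $F=0$), $\{\Psi<-t\}:=\{z\in D:\Psi(z)<-t\}$. $J(\Psi)_o$: equivalence classes $g_o$ of functions $g$ holomorphic on $\{\Psi<-t\}\cap V$ ($V$ a neighborhood of $o$), with $g\sim h$ iff $g=h$ on $\{\Psi<-t\}\cap V$ for some $t\gg1$ and some neighborhood $V$ of $o$; an $\mathcal{O}_{\mathbb{C}^n,o}$-module. For $b\ge0$, $I(b\Psi)_o$ is the submodule of $g_o$ with $\int_{\{\Psi<-t\}\cap V}|g|^2e^{-b\Psi}<+\infty$ for some $t\gg1$, $V$; $I_o:=I(0\Psi)_o$. $\mathcal{I}(\phi)_o$ is the multiplier ideal of a plurisubharmonic $\phi$ at $o$. $P$ is defined by $P([f_o])=[(\tilde F,o)]$, where $(\tilde F,o)\in\mathcal{I}(k\varphi)_o$ is any germ with $\int_{\{\Psi<-t\}\cap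 D_0}|\tilde F-fF^{2k}|^2e^{-k\varphi-k\Psi}<+\infty$ for some $t>0$ and some neighborhood $D_0$ of $o$; it is a well-defined module isomorphism with inverse $[(\tilde F,o)]\mapsto[(\tilde F/F^{2k})_o]$. *)

theory Defs
  imports "HOL-Analysis.Analysis"
begin

text \<open>Points of C^n are vectors of type complex^'n; the origin o is 0.\<close>

definition holo_on :: "(complex^'n) set \<Rightarrow> (complex^'n \<Rightarrow> complex) \<Rightarrow> bool" where
  "holo_on S g \<longleftrightarrow> (\<forall>z\<in>S. \<exists>L. (g has_derivative L) (at z) \<and> (\<forall>c v. L (c *s v) = c * L v))"

definition eexp :: "ereal \<Rightarrow> ennreal" where
  "eexp x = (if x = \<infinity> then \<infinity> else if x = -\<infinity> then 0 else ennreal (exp (real_of_ereal x)))"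

definition usc_on :: "(complex^'n) set \<Rightarrow> (complex^'n \<Rightarrow> ereal) \<Rightarrow> bool" where
  "usc_on D u \<longleftrightarrow> (\<forall>z\<in>D. u z < \<infinity> \<and> (\<forall>c. u z < c \<longrightarrow> (\<forall>\<^sub>F y in at z within D. u y < c)))"

definition circle_mean :: "(complex^'n \<Rightarrow> ereal) \<Rightarrow> complex^'n \<Rightarrow> complex^'n \<Rightarrow> ereal" where
  "circle_mean u z w =
     (enn2ereal (\<integral>\<^sup>+ \<theta>\<in>{0..2*pi}. e2ennreal (max 0 (u (z + cis \<theta> *s w))) \<partial>lborel)
      - enn2ereal (\<integral>\<^sup>+ \<theta>\<in>{0..2*pi}. e2ennreal (max 0 (- u (z + cis \<theta> *s w))) \<partial>lborel))
     / ereal (2*pi)"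

definition psh_on :: "(complex^'n) set \<Rightarrow> (complex^'n \<Rightarrow> ereal) \<Rightarrow> bool" where
  "psh_on D u \<longleftrightarrow> usc_on D u \<and> (\<exists>z\<in>D. u z \<noteq> -\<infinity>) \<and>
     (\<forall>z w. (\<forall>\<zeta>::complex. cmod \<zeta> \<le> 1 \<longrightarrow> z + \<zeta> *s w \<in> D) \<longrightarrow> u z \<le> circle_mean u z w)"

definition pseudoconvex_domain :: "(complex^'n) set \<Rightarrow> bool" where
  "pseudoconvex_domain D \<longleftrightarrow> open D \<and> connected D \<and> D \<noteq> {} \<and>
     (\<exists>u::complex^'n \<Rightarrow> real. continuous_on D u \<and> psh_on D (\<lambda>z. ereal (u z)) \<and>
        (\<forall>c. compact (closure {z\<in>D. u z < c}) \<and> closure {z\<in>D. u z < c} \<subseteq> D))"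

definition elog_abs :: "(complex^'n \<Rightarrow> complex) \<Rightarrow> complex^'n \<Rightarrow> ereal" where
  "elog_abs F z = (if F z = 0 then -\<infinity> else ereal (ln (cmod (F z))))"

definition Psi :: "(complex^'n \<Rightarrow> ereal) \<Rightarrow> (complex^'n \<Rightarrow> complex) \<Rightarrow> complex^'n \<Rightarrow> ereal" where
  "Psi \<psi> F z = (if F z = 0 then 0 else min (\<psi> z - 2 * elog_abs F z) 0)"

definition phi :: "(complex^'n \<Rightarrow> ereal) \<Rightarrow> (complex^'n \<Rightarrow> complex) \<Rightarrow> complex^'n \<Rightarrow> ereal" where
  "phi \<psi> F z = 2 * max (\<psi> z) (2 * elog_abs F z)"

definition sublevel :: "(complex^'n) set \<Rightarrow> (complex^'n \<Rightarrow> ereal) \<Rightarrow> (complex^'n \<Rightarrow> complex) \<Rightarrow> real \<Rightarrow> (complex^'n) set" where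
  "sublevel D \<psi> F t = {z\<in>D. Psi \<psi> F z < ereal (- t)}"

definition germ_J :: "(complex^'n) set \<Rightarrow> (complex^'n \<Rightarrow> ereal) \<Rightarrow> (complex^'n \<Rightarrow> complex) \<Rightarrow> (complex^'n \<Rightarrow> complex) \<Rightarrow> bool" where
  "germ_J D \<psi> F g \<longleftrightarrow> (\<exists>t V. open V \<and> 0 \<in> V \<and> holo_on (sublevel D \<psi> F t \<inter> V) g)"

definition in_I_Psi :: "(complex^'n) set \<Rightarrow> (complex^'n \<Rightarrow> ereal) \<Rightarrow> (complex^'n \<Rightarrow> complex) \<Rightarrow> real \<Rightarrow> (complex^'n \<Rightarrow> complex) \<Rightarrow> bool" where
  "in_I_Psi D \<psi> F b g \<longleftrightarrow> (\<exists>t V. open V \<and> 0 \<in> V \<and>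
     (\<integral>\<^sup>+ z\<in>sublevel D \<psi> F t \<inter> V. ennreal ((cmod (g z))\<^sup>2) * eexp (- (ereal b * Psi \<psi> F z)) \<partial>lborel) < \<infinity>)"

definition in_mult_ideal :: "(complex^'n) set \<Rightarrow> (complex^'n \<Rightarrow> ereal) \<Rightarrow> (complex^'n \<Rightarrow> complex) \<Rightarrow> bool" where
  "in_mult_ideal D w g \<longleftrightarrow> (\<exists>U. open U \<and> 0 \<in> U \<and> holo_on U g \<and>
     (\<exists>V. open V \<and> 0 \<in> V \<and> V \<subseteq> U \<inter> D \<and>
        (\<integral>\<^sup>+ z\<in>V. ennreal ((cmod (g z))\<^sup>2) * eexp (- w z) \<partial>lborel) < \<infinity>))"

end

theory Submission
  imports Defs
begin

text \<open>
  On a sublevel set {\<Psi> < -t} with t \<ge> 0 we have F \<noteq> 0 and \<phi> = 4 log|F|, hence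
  |f F^(2k)|^2 e^(-k\<phi>) = |f|^2, and \<Psi> < 0 together with a \<le> k gives e^(-a\<Psi>) \<le> e^(-k\<Psi>).
  Splitting Ft = f F^(2k) + (Ft - f F^(2k)) and using |x|^2 \<le> 2|x - g|^2 + 2|g|^2, each of
  |Ft|^2 e^(-k\<phi>-a\<Psi>) and |f|^2 e^(-a\<Psi>) is bounded there by twice the other one plus twice
  the remainder |Ft - f F^(2k)|^2 e^(-k\<phi>-k\<Psi>), which is integrable near o by the choice of Ft.
  Off {\<Psi> < -t} we have e^(-a\<Psi>) \<le> e^(at), so there Ft \<in> \<I>(k\<phi>)_o suffices.
\<close>

lemma eexp_mono: "x \<le> y \<Longrightarrow> eexp x \<le> eexp y"
  by (cases x; cases y) (auto simp: eexp_def ennreal_leI)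

lemma eexp_ereal_add: "eexp (ereal r + x) = ennreal (exp r) * eexp x"
  by (cases x) (auto simp: eexp_def exp_add ennreal_mult ennreal_top_mult)

lemma uminus_ereal_mult_nonpos_mono:
  fixes P :: ereal
  assumes "P \<le> 0" "a \<le> b"
  shows "- (ereal a * P) \<le> - (ereal b * P)"
  using assms by (cases P) (auto simp: mult_right_mono_neg)

lemma norm_sq_le_weighted:
  fixes x g :: "'a::real_normed_vector" and c u v :: ennreal
  assumes "u \<le> v"
  shows "ennreal ((norm x)\<^sup>2) * c * u \<le>
    2 * (ennreal ((norm (x - g))\<^sup>2) * c * v) + 2 * (ennreal ((norm g)\<^sup>2) * c * u)"
proof -
  have "norm x \<le> norm (x - g) + norm g"
    using norm_triangle_ineq[of "x - g" g] by simp
  then have real_bound: "(norm x)\<^sup>2 \<le> 2 * (norm (x - g))\<^sup>2 + 2 * (norm g)\<^sup>2"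
    by (smt (verit) norm_ge_zero power_mono sum_squares_bound power2_sum)
  have "ennreal ((norm x)\<^sup>2) \<le> 2 * ennreal ((norm (x - g))\<^sup>2) + 2 * ennreal ((norm g)\<^sup>2)"
  proof -
    have "ennreal ((norm x)\<^sup>2) \<le> ennreal (2 * (norm (x - g))\<^sup>2 + 2 * (norm g)\<^sup>2)"
      using real_bound by (rule ennreal_leI)
    then show ?thesis by (simp add: ennreal_plus ennreal_mult)
  qed
  then have "ennreal ((norm x)\<^sup>2) * c * u \<le> (2 * ennreal ((norm (x - g))\<^sup>2) + 2 * ennreal ((norm g)\<^sup>2)) * c * u"
    by (intro mult_right_mono) auto
  also have "\<dots> \<le> (2 * ennreal ((norm (x - g))\<^sup>2)) * c * v + (2 * ennreal ((norm g)\<^sup>2)) * c * u"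
    using assms by (simp add: distrib_right mult_left_mono)
  finally show ?thesis by (simp add: mult.assoc)
qed

lemma eexp_uminus_add_mult_le:
  fixes E Q :: ereal
  assumes "ereal (- T) \<le> Q" "Q \<le> 0" "0 \<le> a"
  shows "eexp (- (E + ereal a * Q)) \<le> ennreal (exp (a * T)) * eexp (- E)"
proof -
  obtain q where q: "Q = ereal q" "- T \<le> q" "q \<le> 0"
    using assms(1,2) by (cases Q) auto
  have "- (E + ereal a * Q) = ereal (- (a * q)) + - E"
    using q by (cases E) auto
  moreover have "exp (- (a * q)) \<le> exp (a * T)"
    using q assms(3) mult_left_mono[of "- q" T a] by simp
  ultimately show ?thesis
    by (simp add: eexp_ereal_add mult_right_mono ennreal_leI)
qed

lemma Psi_negD:
  assumes "Psi \<psi> F z < 0"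
  shows "F z \<noteq> 0" and "phi \<psi> F z = ereal (4 * ln (cmod (F z)))"
proof -
  show F: "F z \<noteq> 0"
    using assms by (auto simp: Psi_def)
  then have "\<psi> z - 2 * ereal (ln (cmod (F z))) < 0"
    using assms by (simp add: Psi_def elog_abs_def min_less_iff_disj)
  then have "\<psi> z \<le> 2 * ereal (ln (cmod (F z)))"
    by (cases "\<psi> z") auto
  then show "phi \<psi> F z = ereal (4 * ln (cmod (F z)))"
    using F by (simp add: phi_def elog_abs_def max_def)
qed

lemma eexp_weights_if_Psi_neg:
  fixes k :: nat
  assumes "Psi \<psi> F z < 0"
  defines "c \<equiv> ennreal (exp (- (real k * (4 * ln (cmod (F z))))))"
  shows "eexp (- (ereal (real k) * phi \<psi> F z + ereal a * Psi \<psi> F z)) = c * eexp (- (ereal a * Psi \<psi> F z))"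
    and "eexp (- (ereal (real k) * phi \<psi> F z) - ereal b * Psi \<psi> F z) = c * eexp (- (ereal b * Psi \<psi> F z))"
    and "ennreal ((cmod (y * F z ^ (2*k)))\<^sup>2) * c = ennreal ((cmod y)\<^sup>2)"
proof -
  have F: "F z \<noteq> 0" and phi: "phi \<psi> F z = ereal (4 * ln (cmod (F z)))"
    using Psi_negD[OF assms(1)] by auto
  show "eexp (- (ereal (real k) * phi \<psi> F z + ereal a * Psi \<psi> F z)) = c * eexp (- (ereal a * Psi \<psi> F z))"
    unfolding c_def phi by (cases "ereal a * Psi \<psi> F z") (auto simp flip: eexp_ereal_add)
  show "eexp (- (ereal (real k) * phi \<psi> F z) - ereal b * Psi \<psi> F z) = c * eexp (- (ereal b * Psi \<psi> F z))"
    unfolding c_def phi by (cases "ereal b * Psi \<psi> F z") (auto simp flip: eexp_ereal_add)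
  have "exp (real k * (4 * ln (cmod (F z)))) = cmod (F z) ^ (4 * k)"
    using F by (simp add: powr_def mult.assoc flip: powr_realpow)
  then have "(cmod (F z)) ^ (4 * k) * exp (- (real k * (4 * ln (cmod (F z))))) = 1"
    using F by (simp add: exp_minus)
  then show "ennreal ((cmod (y * F z ^ (2*k)))\<^sup>2) * c = ennreal ((cmod y)\<^sup>2)"
    unfolding c_def
    by (simp add: norm_mult norm_power power_mult_distrib mult.assoc flip: power_mult ennreal_mult)
qed

lemma Psi_nonpos: "Psi \<psi> F z \<le> 0"
  by (simp add: Psi_def)

lemma eexp_Psi_weight_mono:
  assumes "a \<le> b"
  shows "eexp (- (ereal a * Psi \<psi> F z)) \<le> eexp (- (ereal b * Psi \<psi> F z))"
  using Psi_nonpos assms by (intro eexp_mono uminus_ereal_mult_nonpos_mono)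

lemma mult_ideal_integrand_le_if_Psi_neg:
  fixes k :: nat and x y :: complex
  assumes "Psi \<psi> F z < 0" "a \<le> real k"
  shows "ennreal ((cmod x)\<^sup>2) * eexp (- (ereal (real k) * phi \<psi> F z + ereal a * Psi \<psi> F z))
    \<le> 2 * (ennreal ((cmod (x - y * F z ^ (2*k)))\<^sup>2)
            * eexp (- (ereal (real k) * phi \<psi> F z) - ereal (real k) * Psi \<psi> F z))
      + 2 * (ennreal ((cmod y)\<^sup>2) * eexp (- (ereal a * Psi \<psi> F z)))"
proof -
  note weights = eexp_weights_if_Psi_neg[OF assms(1), where k = k]
  let ?c = "ennreal (exp (- (real k * (4 * ln (cmod (F z))))))"
  let ?G = "y * F z ^ (2*k)"
  have "ennreal ((cmod x)\<^sup>2) * eexp (- (ereal (real k) * phi \<psi> F z + ereal a * Psi \<psi> F z))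
      = ennreal ((cmod x)\<^sup>2) * ?c * eexp (- (ereal a * Psi \<psi> F z))"
    by (simp add: weights mult.assoc)
  also have "\<dots> \<le> 2 * (ennreal ((cmod (x - ?G))\<^sup>2) * ?c * eexp (- (ereal (real k) * Psi \<psi> F z)))
      + 2 * (ennreal ((cmod ?G)\<^sup>2) * ?c * eexp (- (ereal a * Psi \<psi> F z)))"
    by (intro norm_sq_le_weighted eexp_Psi_weight_mono assms(2))
  finally show ?thesis
    by (simp only: weights(3)) (simp add: weights mult.assoc)
qed

lemma I_Psi_integrand_le_if_Psi_neg:
  fixes k :: nat and x y :: complex
  assumes "Psi \<psi> F z < 0" "a \<le> real k"
  shows "ennreal ((cmod y)\<^sup>2) * eexp (- (ereal a * Psi \<psi> F z))
    \<le> 2 * (ennreal ((cmod (x - y * F z ^ (2*k)))\<^sup>2)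
            * eexp (- (ereal (real k) * phi \<psi> F z) - ereal (real k) * Psi \<psi> F z))
      + 2 * (ennreal ((cmod x)\<^sup>2) * eexp (- (ereal (real k) * phi \<psi> F z + ereal a * Psi \<psi> F z)))"
proof -
  note weights = eexp_weights_if_Psi_neg[OF assms(1), where k = k]
  let ?c = "ennreal (exp (- (real k * (4 * ln (cmod (F z))))))"
  let ?G = "y * F z ^ (2*k)"
  have "ennreal ((cmod y)\<^sup>2) * eexp (- (ereal a * Psi \<psi> F z))
      = ennreal ((cmod ?G)\<^sup>2) * ?c * eexp (- (ereal a * Psi \<psi> F z))"
    by (simp only: weights(3))
  also have "\<dots> \<le> 2 * (ennreal ((cmod (?G - x))\<^sup>2) * ?c * eexp (- (ereal (real k) * Psi \<psi> F z)))
      + 2 * (ennreal ((cmod x)\<^sup>2) * ?c * eexp (- (ereal a * Psi \<psi> F z)))"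
    by (intro norm_sq_le_weighted eexp_Psi_weight_mono assms(2))
  finally show ?thesis
    by (simp add: weights mult.assoc norm_minus_commute)
qed

lemma eexp_borel_measurable[measurable]: "eexp \<in> borel_measurable borel"
  unfolding eexp_def by measurable

lemma elog_abs_measurable[measurable]:
  "F \<in> borel_measurable M \<Longrightarrow> (\<lambda>z. elog_abs F z) \<in> borel_measurable M"
  unfolding elog_abs_def by (rule measurable_If) auto

lemma Psi_measurable[measurable]:
  "F \<in> borel_measurable M \<Longrightarrow> \<psi> \<in> borel_measurable M \<Longrightarrow> (\<lambda>z. Psi \<psi> F z) \<in> borel_measurable M"
  unfolding Psi_def by (rule measurable_If) auto

lemma phi_measurable[measurable]:
  "F \<in> borel_measurable M \<Longrightarrow> \<psi> \<in> borel_measurable M \<Longrightarrow> (\<lambda>z. phi \<psi> F z) \<in> borel_measurable M"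
  unfolding phi_def by measurable

lemma open_Collect_less_if_usc_on:
  assumes "open D" "usc_on D u"
  shows "open {z\<in>D. u z < c}"
proof (rule Topological_Spaces.openI)
  fix z assume z: "z \<in> {z\<in>D. u z < c}"
  have "\<forall>\<^sub>F y in at z. y \<in> D"
    using assms(1) z eventually_at_in_open' by blast
  moreover have "\<forall>\<^sub>F y in at z. u y < c"
    using z assms at_within_open[of z D] by (auto simp: usc_on_def)
  ultimately have "\<forall>\<^sub>F y in at z. y \<in> {z\<in>D. u z < c}"
    by (auto intro: eventually_conj)
  then have "\<forall>\<^sub>F y in nhds z. y \<in> {z\<in>D. u z < c}"
    using z by (simp add: eventually_nhds_conv_at)
  then show "\<exists>T. open T \<and> z \<in> T \<and> T \<subseteq> {z\<in>D. u z < c}"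
    by (auto simp: eventually_nhds)
qed

lemma usc_on_borel_measurable:
  assumes "open D" "usc_on D u"
  shows "u \<in> borel_measurable (restrict_space borel D)"
proof (rule borel_measurableI_less)
  fix c
  show "{z \<in> space (restrict_space borel D). u z < c} \<in> sets (restrict_space borel D)"
    using open_Collect_less_if_usc_on[OF assms] assms(1)
    by (auto simp: sets_restrict_space_iff)
qed

lemma weighted_sq_indicator_measurable:
  fixes h :: "'a::topological_space \<Rightarrow> 'b::real_normed_vector"
  assumes "A \<in> sets borel" "continuous_on A h" "w \<in> borel_measurable (restrict_space borel A)"
  shows "(\<lambda>z. ennreal ((norm (h z))\<^sup>2) * eexp (w z) * indicator A z) \<in> borel_measurable borel"
proof -
  have "h \<in> borel_measurable (restrict_space borel A)"
    using assms(2) by (rule borel_measurable_continuous_on_restrict)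
  then have "(\<lambda>z. ennreal ((norm (h z))\<^sup>2) * eexp (w z)) \<in> borel_measurable (restrict_space borel A)"
    using assms(3) by measurable
  then have "(\<lambda>z. if z \<in> A then ennreal ((norm (h z))\<^sup>2) * eexp (w z) else 0) \<in> borel_measurable borel"
    using assms(1) by (simp add: measurable_restrict_space_iff)
  then show ?thesis
    by (rule measurable_cong[THEN iffD1, rotated]) (simp split: split_indicator)
qed

lemma set_nn_integral_finite_if_le_add:
  assumes "(\<lambda>x. f x * indicator A x) \<in> borel_measurable M" "(\<lambda>x. g x * indicator B x) \<in> borel_measurable M"
    and "(\<integral>\<^sup>+x\<in>A. f x \<partial>M) < \<infinity>" "(\<integral>\<^sup>+x\<in>B. g x \<partial>M) < \<infinity>" "c < \<infinity>" "d < \<infinity>"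
    and "\<And>x. x \<in> C \<Longrightarrow> h x \<le> c * f x * indicator A x + d * g x * indicator B x"
  shows "(\<integral>\<^sup>+x\<in>C. h x \<partial>M) < \<infinity>"
proof -
  have "(\<integral>\<^sup>+x\<in>C. h x \<partial>M) \<le> (\<integral>\<^sup>+x. c * (f x * indicator A x) + d * (g x * indicator B x) \<partial>M)"
    using assms(7) by (intro nn_integral_mono) (auto simp: mult.assoc split: split_indicator)
  also have "\<dots> = c * (\<integral>\<^sup>+x\<in>A. f x \<partial>M) + d * (\<integral>\<^sup>+x\<in>B. g x \<partial>M)"
    using assms(1,2) by (simp add: nn_integral_add nn_integral_cmult)
  also have "\<dots> < \<infinity>"
    using assms(3-6) by (simp add: ennreal_mult_less_top)
  finally show ?thesis .
qed

lemma continuous_on_if_holo_on: "holo_on S g \<Longrightarrow> continuous_on S g"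
  unfolding holo_on_def by (meson continuous_at_imp_continuous_on has_derivative_continuous)

lemma sublevel_antimono: "t \<le> T \<Longrightarrow> sublevel D \<psi> F T \<subseteq> sublevel D \<psi> F t"
  unfolding sublevel_def by (auto intro: order.strict_trans2)

locale weight_data =
  fixes D :: "(complex^'n) set" and \<psi> :: "complex^'n \<Rightarrow> ereal" and F :: "complex^'n \<Rightarrow> complex"
  assumes open_D: "open D" and usc_on_psi: "usc_on D \<psi>" and continuous_on_F: "continuous_on D F"
begin

lemma Psi_phi_measurable_on:
  assumes "A \<subseteq> D"
  shows "(\<lambda>z. Psi \<psi> F z) \<in> borel_measurable (restrict_space borel A)"
    and "(\<lambda>z. phi \<psi> F z) \<in> borel_measurable (restrict_space borel A)"
proof -
  have [measurable]: "\<psi> \<in> borel_measurable (restrict_space borel A)"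
    using usc_on_borel_measurable[OF open_D usc_on_psi] assms by (rule measurable_restrict_mono)
  have [measurable]: "F \<in> borel_measurable (restrict_space borel A)"
    using continuous_on_subset[OF continuous_on_F assms] by (rule borel_measurable_continuous_on_restrict)
  show "(\<lambda>z. Psi \<psi> F z) \<in> borel_measurable (restrict_space borel A)"
    and "(\<lambda>z. phi \<psi> F z) \<in> borel_measurable (restrict_space borel A)"
    by measurable
qed

lemma sublevel_sets: "sublevel D \<psi> F t \<in> sets borel"
proof -
  note [measurable] = Psi_phi_measurable_on[OF order_refl]
  have "sublevel D \<psi> F t = {z \<in> space (restrict_space borel D). Psi \<psi> F z < ereal (- t)}"
    by (simp add: sublevel_def space_restrict_space)
  also have "\<dots> \<in> sets (restrict_space borel D)"
    by measurable
  finally show ?thesis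
    using open_D by (simp add: sets_restrict_space_iff)
qed

lemma weighted_sq_measurable_on:
  assumes "S \<subseteq> D" "S \<in> sets borel" "continuous_on S h"
  shows "(\<lambda>z. ennreal ((cmod (h z))\<^sup>2) * eexp (- (ereal b * phi \<psi> F z + ereal c * Psi \<psi> F z))
      * indicator S z) \<in> borel_measurable borel"
    and "(\<lambda>z. ennreal ((cmod (h z))\<^sup>2) * eexp (- (ereal b * phi \<psi> F z) - ereal c * Psi \<psi> F z)
      * indicator S z) \<in> borel_measurable borel"
    and "(\<lambda>z. ennreal ((cmod (h z))\<^sup>2) * eexp (- (ereal c * Psi \<psi> F z)) * indicator S z)
      \<in> borel_measurable borel"
    and "(\<lambda>z. ennreal ((cmod (h z))\<^sup>2) * eexp (- (ereal b * phi \<psi> F z)) * indicator S z)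
      \<in> borel_measurable borel"
  using Psi_phi_measurable_on[OF assms(1)]
  by (auto intro!: weighted_sq_indicator_measurable assms(2,3))

lemma Psi_neg_on_sublevel: "0 \<le> T \<Longrightarrow> z \<in> sublevel D \<psi> F T \<Longrightarrow> Psi \<psi> F z < 0"
  by (auto simp: sublevel_def intro: order.strict_trans2)

lemma mult_integrand_finite_on_sublevel:
  fixes k :: nat
  assumes "0 \<le> T" "a \<le> real k" and S: "S \<subseteq> sublevel D \<psi> F T" "S \<in> sets borel"
    and "continuous_on S f" "continuous_on S (\<lambda>z. Ft z - f z * F z ^ (2*k))"
    and "(\<integral>\<^sup>+ z\<in>S. ennreal ((cmod (f z))\<^sup>2) * eexp (- (ereal a * Psi \<psi> F z)) \<partial>lborel) < \<infinity>"
    and "(\<integral>\<^sup>+ z\<in>S. ennreal ((cmod (Ft z - f z * F z ^ (2*k)))\<^sup>2)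
      * eexp (- (ereal (real k) * phi \<psi> F z) - ereal (real k) * Psi \<psi> F z) \<partial>lborel) < \<infinity>"
  shows "(\<integral>\<^sup>+ z\<in>S. ennreal ((cmod (Ft z))\<^sup>2)
      * eexp (- (ereal (real k) * phi \<psi> F z + ereal a * Psi \<psi> F z)) \<partial>lborel) < \<infinity>"
proof (rule set_nn_integral_finite_if_le_add[where c = 2 and d = 2])
  have "S \<subseteq> D"
    using S(1) by (auto simp: sublevel_def)
  then show "(\<lambda>z. ennreal ((cmod (Ft z - f z * F z ^ (2*k)))\<^sup>2)
      * eexp (- (ereal (real k) * phi \<psi> F z) - ereal (real k) * Psi \<psi> F z) * indicator S z) \<in> borel_measurable lborel"
    and "(\<lambda>z. ennreal ((cmod (f z))\<^sup>2) * eexp (- (ereal a * Psi \<psi> F z)) * indicator S z) \<in> borel_measurable lborel"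
    using assms by (auto intro: weighted_sq_measurable_on)
  show "ennreal ((cmod (Ft z))\<^sup>2) * eexp (- (ereal (real k) * phi \<psi> F z + ereal a * Psi \<psi> F z))
      \<le> 2 * (ennreal ((cmod (Ft z - f z * F z ^ (2*k)))\<^sup>2)
          * eexp (- (ereal (real k) * phi \<psi> F z) - ereal (real k) * Psi \<psi> F z)) * indicator S z
        + 2 * (ennreal ((cmod (f z))\<^sup>2) * eexp (- (ereal a * Psi \<psi> F z))) * indicator S z"
    if "z \<in> S" for z
    using that mult_ideal_integrand_le_if_Psi_neg[OF Psi_neg_on_sublevel assms(2)] assms(1) S(1)
    by auto
qed (use assms in auto)

lemma I_Psi_integrand_finite_on_sublevel:
  fixes k :: nat
  assumes "0 \<le> T" "a \<le> real k" and S: "S \<subseteq> sublevel D \<psi> F T" "S \<in> sets borel"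
    and "continuous_on S Ft" "continuous_on S (\<lambda>z. Ft z - f z * F z ^ (2*k))"
    and "(\<integral>\<^sup>+ z\<in>S. ennreal ((cmod (Ft z))\<^sup>2)
      * eexp (- (ereal (real k) * phi \<psi> F z + ereal a * Psi \<psi> F z)) \<partial>lborel) < \<infinity>"
    and "(\<integral>\<^sup>+ z\<in>S. ennreal ((cmod (Ft z - f z * F z ^ (2*k)))\<^sup>2)
      * eexp (- (ereal (real k) * phi \<psi> F z) - ereal (real k) * Psi \<psi> F z) \<partial>lborel) < \<infinity>"
  shows "(\<integral>\<^sup>+ z\<in>S. ennreal ((cmod (f z))\<^sup>2) * eexp (- (ereal a * Psi \<psi> F z)) \<partial>lborel) < \<infinity>"
proof (rule set_nn_integral_finite_if_le_add[where c = 2 and d = 2])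
  have "S \<subseteq> D"
    using S(1) by (auto simp: sublevel_def)
  then show "(\<lambda>z. ennreal ((cmod (Ft z - f z * F z ^ (2*k)))\<^sup>2)
      * eexp (- (ereal (real k) * phi \<psi> F z) - ereal (real k) * Psi \<psi> F z) * indicator S z) \<in> borel_measurable lborel"
    and "(\<lambda>z. ennreal ((cmod (Ft z))\<^sup>2) * eexp (- (ereal (real k) * phi \<psi> F z + ereal a * Psi \<psi> F z))
      * indicator S z) \<in> borel_measurable lborel"
    using assms by (auto intro: weighted_sq_measurable_on)
  show "ennreal ((cmod (f z))\<^sup>2) * eexp (- (ereal a * Psi \<psi> F z))
      \<le> 2 * (ennreal ((cmod (Ft z - f z * F z ^ (2*k)))\<^sup>2)
          * eexp (- (ereal (real k) * phi \<psi> F z) - ereal (real k) * Psi \<psi> F z)) * indicator S z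
        + 2 * (ennreal ((cmod (Ft z))\<^sup>2)
          * eexp (- (ereal (real k) * phi \<psi> F z + ereal a * Psi \<psi> F z))) * indicator S z"
    if "z \<in> S" for z
    using that I_Psi_integrand_le_if_Psi_neg[OF Psi_neg_on_sublevel assms(2)] assms(1) S(1)
    by auto
qed (use assms in auto)

lemma mult_integrand_finite_if_finite_on_sublevel:
  fixes k :: nat
  assumes "0 \<le> a" and W: "W \<subseteq> D" "W \<in> sets borel" "continuous_on W Ft"
    and "(\<integral>\<^sup>+ z\<in>sublevel D \<psi> F T \<inter> W. ennreal ((cmod (Ft z))\<^sup>2)
      * eexp (- (ereal (real k) * phi \<psi> F z + ereal a * Psi \<psi> F z)) \<partial>lborel) < \<infinity>"
    and "(\<integral>\<^sup>+ z\<in>W. ennreal ((cmod (Ft z))\<^sup>2) * eexp (- (ereal (real k) * phi \<psi> F z)) \<partial>lborel) < \<infinity>"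
  shows "(\<integral>\<^sup>+ z\<in>W. ennreal ((cmod (Ft z))\<^sup>2)
      * eexp (- (ereal (real k) * phi \<psi> F z + ereal a * Psi \<psi> F z)) \<partial>lborel) < \<infinity>"
proof (rule set_nn_integral_finite_if_le_add[where c = 1 and d = "ennreal (exp (a * T))"])
  show "(\<lambda>z. ennreal ((cmod (Ft z))\<^sup>2) * eexp (- (ereal (real k) * phi \<psi> F z + ereal a * Psi \<psi> F z))
      * indicator (sublevel D \<psi> F T \<inter> W) z) \<in> borel_measurable lborel"
    using W sublevel_sets by (auto intro: weighted_sq_measurable_on continuous_on_subset)
  show "(\<lambda>z. ennreal ((cmod (Ft z))\<^sup>2) * eexp (- (ereal (real k) * phi \<psi> F z)) * indicator W z)
      \<in> borel_measurable lborel"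
    using W by (auto intro: weighted_sq_measurable_on)
  show "ennreal ((cmod (Ft z))\<^sup>2) * eexp (- (ereal (real k) * phi \<psi> F z + ereal a * Psi \<psi> F z))
      \<le> 1 * (ennreal ((cmod (Ft z))\<^sup>2) * eexp (- (ereal (real k) * phi \<psi> F z + ereal a * Psi \<psi> F z)))
          * indicator (sublevel D \<psi> F T \<inter> W) z
        + ennreal (exp (a * T)) * (ennreal ((cmod (Ft z))\<^sup>2) * eexp (- (ereal (real k) * phi \<psi> F z)))
          * indicator W z"
    if "z \<in> W" for z
  proof (cases "z \<in> sublevel D \<psi> F T")
    case False
    then have "ereal (- T) \<le> Psi \<psi> F z"
      using that W(1) by (auto simp: sublevel_def)
    then have "eexp (- (ereal (real k) * phi \<psi> F z + ereal a * Psi \<psi> F z))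
        \<le> ennreal (exp (a * T)) * eexp (- (ereal (real k) * phi \<psi> F z))"
      using Psi_nonpos assms(1) by (rule eexp_uminus_add_mult_le)
    from mult_left_mono[OF this, of "ennreal ((cmod (Ft z))\<^sup>2)"] False that show ?thesis
      by (simp add: mult.left_commute)
  qed (simp add: add_increasing2 that)
qed (use assms in auto)

lemma continuous_on_diff_mult_F_power:
  "S \<subseteq> D \<Longrightarrow> continuous_on S f \<Longrightarrow> continuous_on S Ft
    \<Longrightarrow> continuous_on S (\<lambda>z. Ft z - f z * F z ^ m)"
  using continuous_on_subset[OF continuous_on_F] by (intro continuous_intros)

lemma in_mult_ideal_add_Psi_if_in_I_Psi:
  fixes k :: nat
  assumes a: "0 \<le> a" "a \<le> real k"
    and f: "germ_J D \<psi> F f" "in_I_Psi D \<psi> F a f"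
    and Ft: "in_mult_ideal D (\<lambda>z. ereal (real k) * phi \<psi> F z) Ft"
    and D0: "open D0" "0 \<in> D0"
    and diff: "(\<integral>\<^sup>+ z\<in>sublevel D \<psi> F t \<inter> D0. ennreal ((cmod (Ft z - f z * F z ^ (2*k)))\<^sup>2)
      * eexp (- (ereal (real k) * phi \<psi> F z) - ereal (real k) * Psi \<psi> F z) \<partial>lborel) < \<infinity>"
  shows "in_mult_ideal D (\<lambda>z. ereal (real k) * phi \<psi> F z + ereal a * Psi \<psi> F z) Ft"
proof -
  obtain tf Vf where Vf: "open Vf" "0 \<in> Vf" and holo_f: "holo_on (sublevel D \<psi> F tf \<inter> Vf) f"
    using f(1) unfolding germ_J_def by blast
  obtain t1 V1 where V1: "open V1" "0 \<in> V1" and fin_f: "(\<integral>\<^sup>+ z\<in>sublevel D \<psi> F t1 \<inter> V1.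
      ennreal ((cmod (f z))\<^sup>2) * eexp (- (ereal a * Psi \<psi> F z)) \<partial>lborel) < \<infinity>"
    using f(2) unfolding in_I_Psi_def by blast
  obtain U V3 where U: "open U" "0 \<in> U" "holo_on U Ft" and V3: "open V3" "0 \<in> V3" "V3 \<subseteq> U \<inter> D"
    and fin_Ft: "(\<integral>\<^sup>+ z\<in>V3. ennreal ((cmod (Ft z))\<^sup>2) * eexp (- (ereal (real k) * phi \<psi> F z)) \<partial>lborel) < \<infinity>"
    using Ft unfolding in_mult_ideal_def by blast
  define T where "T = max 0 (max tf (max t1 t))"
  define W where "W = Vf \<inter> V1 \<inter> D0 \<inter> V3"
  define S where "S = sublevel D \<psi> F T \<inter> W"
  have T: "0 \<le> T" "sublevel D \<psi> F T \<subseteq> sublevel D \<psi> F tf \<inter> sublevel D \<psi> F t1 \<inter> sublevel D \<psi> F t"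
    by (auto simp: T_def intro!: Int_greatest sublevel_antimono)
  have W: "open W" "0 \<in> W" "W \<subseteq> U \<inter> D" "W \<in> sets borel"
    using Vf V1 D0 V3 by (auto simp: W_def)
  have S: "S \<subseteq> sublevel D \<psi> F T" "S \<in> sets borel" "S \<subseteq> W" "S \<subseteq> sublevel D \<psi> F tf \<inter> Vf"
    "S \<subseteq> sublevel D \<psi> F t1 \<inter> V1" "S \<subseteq> sublevel D \<psi> F t \<inter> D0"
    using T(2) sublevel_sets W(4) by (auto simp: S_def W_def)
  have cont_Ft: "continuous_on W Ft"
    using continuous_on_if_holo_on[OF U(3)] W(3) by (blast intro: continuous_on_subset)
  have cont_f: "continuous_on S f"
    using continuous_on_if_holo_on[OF holo_f] S(4) by (rule continuous_on_subset)
  have cont_diff: "continuous_on S (\<lambda>z. Ft z - f z * F z ^ (2*k))"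
    using S(3) W(3) cont_f continuous_on_subset[OF cont_Ft S(3)]
    by (intro continuous_on_diff_mult_F_power) auto
  have "(\<integral>\<^sup>+ z\<in>sublevel D \<psi> F T \<inter> W. ennreal ((cmod (Ft z))\<^sup>2)
      * eexp (- (ereal (real k) * phi \<psi> F z + ereal a * Psi \<psi> F z)) \<partial>lborel) < \<infinity>"
    unfolding S_def[symmetric]
    using mult_integrand_finite_on_sublevel[OF T(1) a(2) S(1,2) cont_f cont_diff
        le_less_trans[OF nn_set_integral_set_mono[OF S(5)] fin_f]
        le_less_trans[OF nn_set_integral_set_mono[OF S(6)] diff]] .
  then have "(\<integral>\<^sup>+ z\<in>W. ennreal ((cmod (Ft z))\<^sup>2)
      * eexp (- (ereal (real k) * phi \<psi> F z + ereal a * Psi \<psi> F z)) \<partial>lborel) < \<infinity>"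
    using mult_integrand_finite_if_finite_on_sublevel[OF a(1) _ W(4) cont_Ft] W(3)
      le_less_trans[OF nn_set_integral_set_mono fin_Ft]
    by (auto simp: W_def)
  then show ?thesis
    using U W unfolding in_mult_ideal_def by blast
qed

lemma in_I_Psi_if_in_mult_ideal_add_Psi:
  fixes k :: nat
  assumes a: "a \<le> real k"
    and f: "germ_J D \<psi> F f"
    and Ft: "in_mult_ideal D (\<lambda>z. ereal (real k) * phi \<psi> F z + ereal a * Psi \<psi> F z) Ft"
    and D0: "open D0" "0 \<in> D0"
    and diff: "(\<integral>\<^sup>+ z\<in>sublevel D \<psi> F t \<inter> D0. ennreal ((cmod (Ft z - f z * F z ^ (2*k)))\<^sup>2)
      * eexp (- (ereal (real k) * phi \<psi> F z) - ereal (real k) * Psi \<psi> F z) \<partial>lborel) < \<infinity>"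
  shows "in_I_Psi D \<psi> F a f"
proof -
  obtain tf Vf where Vf: "open Vf" "0 \<in> Vf" and holo_f: "holo_on (sublevel D \<psi> F tf \<inter> Vf) f"
    using f unfolding germ_J_def by blast
  obtain U V3 where U: "holo_on U Ft" and V3: "open V3" "0 \<in> V3" "V3 \<subseteq> U \<inter> D"
    and fin_Ft: "(\<integral>\<^sup>+ z\<in>V3. ennreal ((cmod (Ft z))\<^sup>2)
      * eexp (- (ereal (real k) * phi \<psi> F z + ereal a * Psi \<psi> F z)) \<partial>lborel) < \<infinity>"
    using Ft unfolding in_mult_ideal_def by blast
  define T where "T = max 0 (max tf t)"
  define W where "W = Vf \<inter> D0 \<inter> V3"
  define S where "S = sublevel D \<psi> F T \<inter> W"
  have T: "0 \<le> T" "sublevel D \<psi> F T \<subseteq> sublevel D \<psi> F tf \<inter> sublevel D \<psi> F t"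
    by (auto simp: T_def intro!: Int_greatest sublevel_antimono)
  have W: "open W" "0 \<in> W" "W \<in> sets borel"
    using Vf D0 V3 by (auto simp: W_def)
  have S: "S \<subseteq> sublevel D \<psi> F T" "S \<in> sets borel" "S \<subseteq> U \<inter> D" "S \<subseteq> sublevel D \<psi> F tf \<inter> Vf"
    "S \<subseteq> V3" "S \<subseteq> sublevel D \<psi> F t \<inter> D0"
    using T(2) sublevel_sets W(3) V3(3) by (auto simp: S_def W_def)
  have cont_Ft: "continuous_on S Ft"
    using continuous_on_if_holo_on[OF U] S(3) by (blast intro: continuous_on_subset)
  have cont_f: "continuous_on S f"
    using continuous_on_if_holo_on[OF holo_f] S(4) by (rule continuous_on_subset)
  have cont_diff: "continuous_on S (\<lambda>z. Ft z - f z * F z ^ (2*k))"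
    using S(3) cont_f cont_Ft by (intro continuous_on_diff_mult_F_power) auto
  have "(\<integral>\<^sup>+ z\<in>S. ennreal ((cmod (f z))\<^sup>2) * eexp (- (ereal a * Psi \<psi> F z)) \<partial>lborel) < \<infinity>"
    using I_Psi_integrand_finite_on_sublevel[OF T(1) a S(1,2) cont_Ft cont_diff
        le_less_trans[OF nn_set_integral_set_mono[OF S(5)] fin_Ft]
        le_less_trans[OF nn_set_integral_set_mono[OF S(6)] diff]] .
  then show ?thesis
    using W(1,2) unfolding in_I_Psi_def S_def by blast
qed



end

theorem lemma2p6:
  fixes D :: "(complex^'n) set" and F f Ft :: "complex^'n \<Rightarrow> complex"
    and \<psi> :: "complex^'n \<Rightarrow> ereal" and k :: nat and a :: real
  assumes "pseudoconvex_domain D" and "0 \<in> D"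
    and "holo_on D F" and "psh_on D \<psi>"
    and "k > 0" and "0 \<le> a" and "a < real k"
    \<comment> \<open>[f_o] \<in> I_o\<close>
    and "germ_J D \<psi> F f" and "in_I_Psi D \<psi> F 0 f"
    \<comment> \<open>(Ft,o) \<in> \<I>(k\<phi>)_o represents P([f_o])\<close>
    and "in_mult_ideal D (\<lambda>z. ereal (real k) * phi \<psi> F z) Ft"
    and "\<exists>t>0. \<exists>D0. open D0 \<and> 0 \<in> D0 \<and>
          (\<integral>\<^sup>+ z\<in>sublevel D \<psi> F t \<inter> D0.
             ennreal ((cmod (Ft z - f z * F z ^ (2*k)))\<^sup>2)
             * eexp (- (ereal (real k) * phi \<psi> F z) - ereal (real k) * Psi \<psi> F z) \<partial>lborel) < \<infinity>"
  shows "in_I_Psi D \<psi> F a f \<longleftrightarrow>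
         in_mult_ideal D (\<lambda>z. ereal (real k) * phi \<psi> F z + ereal a * Psi \<psi> F z) Ft"
proof -
  interpret weight_data D \<psi> F
    using assms(1,3,4) continuous_on_if_holo_on
    by unfold_locales (auto simp: pseudoconvex_domain_def psh_on_def)
  show ?thesis
    using assms(6-8,10,11)
    by (blast intro: in_mult_ideal_add_Psi_if_in_I_Psi in_I_Psi_if_in_mult_ideal_add_Psi less_imp_le)
qed

end
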